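(* For every right-most path $\gamma$ in the triangular lattice $\mathbb{T}$, $$\frac{|\gamma|-1}{6}\le|\partial^+\gamma|\le 5|\gamma|.$$
   Context: $\mathbb{T}$ is the triangular lattice in $\mathbb{C}$ (vertices $\{x+ye^{\pi i/3}:x,y\in\mathbb{Z}\}$, edges between vertices at Euclidean distance $1$). A path $\gamma=(v_0,\dots,v_n)$ has $v_{i-1},v_i$ adjacent; its length is $|\gamma|=n$. Each edge gives two oriented edges $\langle u,v\rangle,\langle v,u\rangle$ (head of $\langle u,v\rangle$ is $v$). $\gamma$ is simple if it traverses each oriented edge at most once; if $v_0=v_n$ it is a circuit and indices are mod $n$. When $v_{i-1},v_{i+1}$ are defined, the right-boundary edges at $v_i$ are the oriented edges out of $v_i$ listed counterclockwise strictly after $\langle v_i,v_{i-1}\rangle$ and strictly before $\langle v_i,v_{i+1}\rangle$ (otherwise none); their heads are the right-boundary vertices of $v_i$; $\partial^+\gamma$ is the set of all right-boundary vertices of all $v_i$. $\gamma$ is right-most if it is simple, uses no vertex of $\partial^+\gamma$, and each $v_i$ with $v_{i-1},v_{i+1}$ defined has at least one right-boundary vertex. *)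

theory Defs
  imports "HOL-Analysis.Analysis"
begin

(* Vertices of the triangular lattice T are points x + y e^{i pi/3}, x,y integers;
   we index them by the pair (x,y). *)
type_synonym tvert = "int \<times> int"

definition emb :: "tvert \<Rightarrow> complex" where
  "emb v = of_int (fst v) + of_int (snd v) * cis (pi / 3)"

definition tadj :: "tvert \<Rightarrow> tvert \<Rightarrow> bool" where
  "tadj u v \<longleftrightarrow> cmod (emb u - emb v) = 1"

(* direction index of the oriented edge <u,v>: its argument is k*pi/3, k in {0..5};
   counterclockwise order of the oriented edges out of u = increasing k (cyclically) *)
definition dir_idx :: "tvert \<Rightarrow> tvert \<Rightarrow> nat" where
  "dir_idx u v = (THE k. k < 6 \<and> emb v - emb u = cis (real k * pi / 3))"

definition is_path :: "tvert list \<Rightarrow> bool" where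
  "is_path g \<longleftrightarrow> g \<noteq> [] \<and> (\<forall>i. Suc i < length g \<longrightarrow> tadj (g ! i) (g ! Suc i))"

definition plen :: "tvert list \<Rightarrow> nat" where
  "plen g = length g - 1"

(* simple: each oriented edge traversed at most once *)
definition simple_path :: "tvert list \<Rightarrow> bool" where
  "simple_path g \<longleftrightarrow> distinct (zip g (tl g))"

definition is_circuit :: "tvert list \<Rightarrow> bool" where
  "is_circuit g \<longleftrightarrow> plen g \<ge> 1 \<and> g ! 0 = g ! plen g"

(* indices i at which v_{i-1} and v_{i+1} are both defined (for circuits, indices mod n,
   so every i < n; the index n denotes the same vertex as 0) *)
definition inner_idx :: "tvert list \<Rightarrow> nat set" where
  "inner_idx g = (if is_circuit g then {..<plen g} else {i. 0 < i \<and> i < plen g})"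

definition prev_v :: "tvert list \<Rightarrow> nat \<Rightarrow> tvert" where
  "prev_v g i = (if is_circuit g then g ! ((i + plen g - 1) mod plen g) else g ! (i - 1))"

definition next_v :: "tvert list \<Rightarrow> nat \<Rightarrow> tvert" where
  "next_v g i = (if is_circuit g then g ! ((i + 1) mod plen g) else g ! (i + 1))"

(* right-boundary vertices of v_i: heads of the oriented edges out of v_i listed
   counterclockwise strictly after <v_i,v_{i-1}> and strictly before <v_i,v_{i+1}>.
   Counterclockwise offset of direction j from the edge to v_{i-1}: (j - kp) mod 6;
   offset of the edge to v_{i+1}: in {1..6} (a full turn, 6, if v_{i+1} = v_{i-1}). *)
definition right_bdry_at :: "tvert list \<Rightarrow> nat \<Rightarrow> tvert set" where
  "right_bdry_at g i =
    (if i \<in> inner_idx g then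
       (let v = g ! i; kp = dir_idx v (prev_v g i); kn = dir_idx v (next_v g i) in
        {w. tadj v w \<and> 0 < (dir_idx v w + 6 - kp) mod 6 \<and>
             (dir_idx v w + 6 - kp) mod 6 < (kn + 11 - kp) mod 6 + 1})
     else {})"

definition right_bdry :: "tvert list \<Rightarrow> tvert set" where
  "right_bdry g = (\<Union>i\<le>plen g. right_bdry_at g i)"

definition right_most :: "tvert list \<Rightarrow> bool" where
  "right_most g \<longleftrightarrow> is_path g \<and> simple_path g \<and> set g \<inter> right_bdry g = {} \<and>
     (\<forall>i\<in>inner_idx g. right_bdry_at g i \<noteq> {})"

end

theory Submission
  imports Defs
begin

(* Upper bound: every right-boundary vertex of v_i is a neighbour of v_i other than v_(i-1),
   so each of the at most n inner visits contributes at most 5 of them.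
   Lower bound: pick a right-boundary vertex w_i of v_i for every inner visit i.  The pair
   (w_i, v_i) determines i: the right-boundary directions of a visit form an open
   counterclockwise arc starting at the incoming direction, and if two visits of v have
   overlapping arcs but different incoming directions, one incoming neighbour lies in the
   other visit's arc, i.e. a path vertex lies on the right boundary.  So both visits enter v
   along the same oriented edge, which simplicity forbids.  Since a vertex has 6 neighbours,
   the at least n - 1 inner visits give n - 1 <= 6 |right boundary|. *)

definition tdir :: "nat \<Rightarrow> tvert" where
  "tdir k = [(1, 0), (0, 1), (-1, 1), (-1, 0), (0, -1), (1, -1)] ! k"

lemma lessThan_6: "{..<6::nat} = {0, 1, 2, 3, 4, 5}"
  by auto

lemma tdir_image: "tdir ` {..<6} = {(1, 0), (0, 1), (-1, 1), (-1, 0), (0, -1), (1, -1)}"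
  by (simp add: lessThan_6 tdir_def)

lemma cis_pi_third: "cis (pi / 3) = Complex (1 / 2) (sqrt 3 / 2)"
  by (simp add: cis.ctr cos_60 sin_60)

lemma emb_Complex:
  "emb v = Complex (of_int (fst v) + of_int (snd v) / 2) (of_int (snd v) * sqrt 3 / 2)"
  by (simp add: emb_def cis_pi_third complex_eq_iff)

lemma emb_tdir:
  assumes "k < 6"
  shows "emb (tdir k) = cis (real k * pi / 3)"
proof -
  define \<omega> where "\<omega> = cis (pi / 3)"
  have sq: "\<omega> * \<omega> = \<omega> - 1"
    by (simp add: \<omega>_def cis_pi_third complex_eq_iff)
  have rec: "\<omega> ^ Suc (Suc n) = \<omega> ^ Suc n - \<omega> ^ n" for n
  proof -
    have "\<omega> ^ Suc (Suc n) = \<omega> ^ n * (\<omega> * \<omega>)" by (simp add: algebra_simps)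
    also have "\<dots> = \<omega> ^ Suc n - \<omega> ^ n" by (simp add: sq algebra_simps)
    finally show ?thesis .
  qed
  have "cis (real k * pi / 3) = \<omega> ^ k"
    by (simp only: \<omega>_def Complex.DeMoivre times_divide_eq_right)
  moreover have "k \<in> {0, 1, 2, 3, 4, 5}" using assms lessThan_6 by blast
  ultimately show ?thesis
    by (auto simp: emb_def tdir_def rec numeral_eq_Suc \<omega>_def[symmetric] simp del: power_Suc)
qed

lemma inj_emb: "inj emb"
  by (rule injI) (auto simp: emb_Complex complex_eq_iff prod_eq_iff)

lemma emb_diff: "emb u - emb v = emb (u - v)"
  by (simp add: emb_def algebra_simps)

lemma norm_emb_squared: "(cmod (emb v))\<^sup>2 = of_int ((fst v)\<^sup>2 + fst v * snd v + (snd v)\<^sup>2)"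
  by (simp only: cmod_power2) (simp add: emb_Complex power2_eq_square algebra_simps)

lemma unit_norm_form_solutions:
  fixes a b :: int
  assumes "a\<^sup>2 + a * b + b\<^sup>2 = 1"
  shows "(a, b) \<in> tdir ` {..<6}"
proof -
  have "(2 * a + b)\<^sup>2 + 3 * b\<^sup>2 = 4" "(2 * b + a)\<^sup>2 + 3 * a\<^sup>2 = 4"
    using assms by (simp_all add: power2_eq_square algebra_simps)
  then have "a\<^sup>2 \<le> 1" "b\<^sup>2 \<le> 1"
    by (smt (verit) zero_le_power2)+
  then have "a \<in> {-1, 0, 1}" "b \<in> {-1, 0, 1}"
    by (auto simp: abs_square_le_1 abs_le_iff)
  with assms show ?thesis
    unfolding tdir_image by auto
qed

lemma tadj_commute: "tadj u v \<longleftrightarrow> tadj v u"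
  by (simp add: tadj_def norm_minus_commute)

lemma tadj_iff: "tadj v w \<longleftrightarrow> w - v \<in> tdir ` {..<6}"
proof
  assume "tadj v w"
  then have "(cmod (emb (w - v)))\<^sup>2 = 1"
    by (simp add: tadj_def emb_diff[symmetric] norm_minus_commute)
  then have "(fst (w - v))\<^sup>2 + fst (w - v) * snd (w - v) + (snd (w - v))\<^sup>2 = 1"
    unfolding norm_emb_squared by linarith
  from unit_norm_form_solutions[OF this] show "w - v \<in> tdir ` {..<6}"
    by (simp only: prod.collapse)
next
  assume "w - v \<in> tdir ` {..<6}"
  then have "cmod (emb w - emb v) = 1"
    by (auto simp: emb_diff emb_tdir)
  then show "tadj v w"
    by (simp add: tadj_def norm_minus_commute)
qed

lemma neighbours_eq: "{w. tadj v w} = (\<lambda>k. v + tdir k) ` {..<6}"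
  by (auto simp: tadj_iff algebra_simps image_def)

lemma finite_neighbours: "finite {w. tadj v w}"
  by (simp add: neighbours_eq)

lemma tdir_inj: "k < 6 \<Longrightarrow> k' < 6 \<Longrightarrow> tdir k = tdir k' \<Longrightarrow> k = k'"
  by (auto simp: tdir_def less_Suc_eq numeral_eq_Suc)

lemma dir_idx_add_tdir:
  assumes "k < 6"
  shows "dir_idx v (v + tdir k) = k"
  unfolding dir_idx_def
proof (rule the_equality)
  show "k < 6 \<and> emb (v + tdir k) - emb v = cis (real k * pi / 3)"
    using assms by (simp add: emb_diff emb_tdir)
next
  fix k' assume "k' < 6 \<and> emb (v + tdir k) - emb v = cis (real k' * pi / 3)"
  then have "k' < 6" "emb (tdir k) = emb (tdir k')"
    by (simp_all add: emb_diff emb_tdir)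
  then show "k' = k"
    using assms tdir_inj inj_emb by (metis injD)
qed

lemma tadj_dir_idx:
  assumes "tadj v w"
  shows "dir_idx v w < 6" "w = v + tdir (dir_idx v w)"
proof -
  have "w \<in> (\<lambda>k. v + tdir k) ` {..<6}"
    using assms neighbours_eq by blast
  then obtain k where "k < 6" "w = v + tdir k"
    by blast
  then show "dir_idx v w < 6" "w = v + tdir (dir_idx v w)"
    by (simp_all add: dir_idx_add_tdir)
qed

definition in_ccw_arc :: "nat \<Rightarrow> nat \<Rightarrow> nat \<Rightarrow> bool" where
  "in_ccw_arc a L d \<longleftrightarrow> 0 < (d + 6 - a) mod 6 \<and> (d + 6 - a) mod 6 < L"

(* If a \<noteq> c, then turning counterclockwise from a one meets d before c, so turning
   counterclockwise from c one meets a before d. *)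
lemma in_ccw_arc_same_start:
  assumes "a < 6" "c < 6" "d < 6"
    and "in_ccw_arc a L d" "in_ccw_arc c M d"
    and "\<not> in_ccw_arc a L c" "\<not> in_ccw_arc c M a"
  shows "a = c"
proof -
  have "x = 0 \<or> x = 1 \<or> x = 2 \<or> x = 3 \<or> x = 4 \<or> x = 5" if "x < 6" for x :: nat
    using that by auto
  from this[OF assms(1)] this[OF assms(2)] this[OF assms(3)] show ?thesis
    using assms(4-) unfolding in_ccw_arc_def by (elim disjE; simp)
qed

lemma in_ccw_arc_start: "\<not> in_ccw_arc a L a"
  by (simp add: in_ccw_arc_def)

lemma inner_idx_less_plen: "i \<in> inner_idx g \<Longrightarrow> i < plen g"
  by (auto simp: inner_idx_def split: if_splits)

lemma finite_inner_idx: "finite (inner_idx g)"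
  by (meson finite_lessThan finite_subset inner_idx_less_plen lessThan_iff subsetI)

lemma card_inner_idx: "plen g - 1 \<le> card (inner_idx g)" "card (inner_idx g) \<le> plen g"
proof -
  show "card (inner_idx g) \<le> plen g"
    using card_mono[of "{..<plen g}" "inner_idx g"] inner_idx_less_plen by auto
  have "inner_idx g = {..<plen g} \<or> inner_idx g = {1..<plen g}"
    by (auto simp: inner_idx_def)
  then show "plen g - 1 \<le> card (inner_idx g)"
    by (elim disjE) simp_all
qed

definition prev_idx :: "tvert list \<Rightarrow> nat \<Rightarrow> nat" where
  "prev_idx g i = (if is_circuit g then (i + plen g - 1) mod plen g else i - 1)"

lemma prev_v_eq_nth: "prev_v g i = g ! prev_idx g i"
  by (simp add: prev_v_def prev_idx_def)

lemma prev_idx_less_plen: "i \<in> inner_idx g \<Longrightarrow> prev_idx g i < plen g"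
  by (auto simp: prev_idx_def inner_idx_def is_circuit_def)

lemma Suc_prev_idx:
  assumes "i \<in> inner_idx g"
  shows "i = (if is_circuit g then Suc (prev_idx g i) mod plen g else Suc (prev_idx g i))"
proof (cases "is_circuit g")
  case True
  then have "i < plen g" "1 \<le> plen g"
    using assms by (auto simp: inner_idx_def is_circuit_def)
  then have "Suc ((i + plen g - 1) mod plen g) mod plen g = i"
    by (cases i) (simp_all add: mod_Suc_eq)
  with True show ?thesis
    by (simp add: prev_idx_def)
next
  case False
  with assms show ?thesis
    by (auto simp: prev_idx_def inner_idx_def)
qed

lemma inj_on_prev_idx: "inj_on (prev_idx g) (inner_idx g)"
proof (rule inj_onI)
  fix i j assume "i \<in> inner_idx g" "j \<in> inner_idx g" "prev_idx g i = prev_idx g j"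
  then show "i = j"
    using Suc_prev_idx[of i g] Suc_prev_idx[of j g] by metis
qed

lemma nth_Suc_prev_idx:
  assumes "i \<in> inner_idx g"
  shows "g ! Suc (prev_idx g i) = g ! i"
proof (cases "is_circuit g \<and> Suc (prev_idx g i) = plen g")
  case True
  then have "i = 0"
    using Suc_prev_idx[OF assms] by simp
  with True show ?thesis
    by (simp add: is_circuit_def)
next
  case False
  then show ?thesis
    using Suc_prev_idx[OF assms] prev_idx_less_plen[OF assms] by (auto split: if_splits)
qed

lemma tadj_prev_v:
  assumes "is_path g" "i \<in> inner_idx g"
  shows "tadj (g ! i) (prev_v g i)"
proof -
  have "Suc (prev_idx g i) < length g"
    using prev_idx_less_plen[OF assms(2)] by (simp add: plen_def)
  then have "tadj (g ! prev_idx g i) (g ! Suc (prev_idx g i))"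
    using assms(1) unfolding is_path_def by blast
  then have "tadj (g ! prev_idx g i) (g ! i)"
    using nth_Suc_prev_idx[OF assms(2)] by simp
  then show ?thesis
    by (simp add: prev_v_eq_nth tadj_commute)
qed

lemma prev_v_in_set: "i \<in> inner_idx g \<Longrightarrow> prev_v g i \<in> set g"
  using prev_idx_less_plen[of i g] by (simp add: prev_v_eq_nth plen_def)

lemma simple_path_prev_v_inj:
  assumes "simple_path g" "i \<in> inner_idx g" "j \<in> inner_idx g"
    and "g ! i = g ! j" "prev_v g i = prev_v g j"
  shows "i = j"
proof -
  have edge: "zip g (tl g) ! prev_idx g k = (prev_v g k, g ! k)"
    and len: "prev_idx g k < length (zip g (tl g))" if "k \<in> inner_idx g" for k
    using prev_idx_less_plen[OF that] nth_Suc_prev_idx[OF that]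
    by (simp_all add: prev_v_eq_nth nth_tl plen_def)
  have "prev_idx g i = prev_idx g j"
    using assms edge len nth_eq_iff_index_eq unfolding simple_path_def by metis
  then show ?thesis
    using inj_on_prev_idx assms(2,3) by (metis inj_onD)
qed

(* The length L of the arc is fixed by next_v; only its starting direction matters below. *)
lemma right_bdry_at_ccw_arc:
  assumes "i \<in> inner_idx g"
  obtains L where "right_bdry_at g i =
    {w. tadj (g ! i) w \<and> in_ccw_arc (dir_idx (g ! i) (prev_v g i)) L (dir_idx (g ! i) w)}"
  using assms by (simp add: right_bdry_at_def in_ccw_arc_def Let_def)

lemma right_bdry_at_tadj: "w \<in> right_bdry_at g i \<Longrightarrow> tadj (g ! i) w"
  by (simp add: right_bdry_at_def Let_def split: if_splits)

lemma right_bdry_eq_UN: "right_bdry g = (\<Union>i\<in>inner_idx g. right_bdry_at g i)"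
proof -
  have "right_bdry_at g i = {}" if "i \<notin> inner_idx g" for i
    using that by (simp add: right_bdry_at_def)
  moreover have "inner_idx g \<subseteq> {..plen g}"
    using inner_idx_less_plen by fastforce
  ultimately show ?thesis
    unfolding right_bdry_def by blast
qed

lemma right_bdry_at_subset:
  assumes "i \<in> inner_idx g"
  shows "right_bdry_at g i \<subseteq> (\<lambda>k. g ! i + tdir k) ` ({..<6} - {dir_idx (g ! i) (prev_v g i)})"
proof
  fix w assume "w \<in> right_bdry_at g i"
  then have "tadj (g ! i) w" "dir_idx (g ! i) w \<noteq> dir_idx (g ! i) (prev_v g i)"
    using right_bdry_at_tadj right_bdry_at_ccw_arc[OF assms] in_ccw_arc_start by (metis mem_Collect_eq)+
  then show "w \<in> (\<lambda>k. g ! i + tdir k) ` ({..<6} - {dir_idx (g ! i) (prev_v g i)})"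
    using tadj_dir_idx by blast
qed

lemma finite_right_bdry_at: "finite (right_bdry_at g i)"
proof (cases "i \<in> inner_idx g")
  case True
  then show ?thesis
    using right_bdry_at_subset finite_subset by blast
next
  case False
  then show ?thesis
    by (simp add: right_bdry_at_def)
qed

lemma card_right_bdry_at_le:
  assumes "is_path g" "i \<in> inner_idx g"
  shows "card (right_bdry_at g i) \<le> 5"
proof -
  let ?D = "{..<6} - {dir_idx (g ! i) (prev_v g i)}"
  have "card (right_bdry_at g i) \<le> card ((\<lambda>k. g ! i + tdir k) ` ?D)"
    using right_bdry_at_subset[OF assms(2)] by (intro card_mono) auto
  also have "\<dots> \<le> card ?D"
    by (rule card_image_le) simp
  also have "\<dots> = 5"
    using tadj_dir_idx(1)[OF tadj_prev_v[OF assms]] by simp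
  finally show "card (right_bdry_at g i) \<le> 5" .
qed

lemma finite_right_bdry: "finite (right_bdry g)"
  by (simp add: right_bdry_eq_UN finite_inner_idx finite_right_bdry_at)

lemma card_right_bdry_le:
  assumes "is_path g"
  shows "card (right_bdry g) \<le> 5 * plen g"
proof -
  have "card (right_bdry g) \<le> (\<Sum>i\<in>inner_idx g. card (right_bdry_at g i))"
    unfolding right_bdry_eq_UN by (rule card_UN_le[OF finite_inner_idx])
  also have "\<dots> \<le> 5 * card (inner_idx g)"
    using sum_bounded_above[of "inner_idx g" "\<lambda>i. card (right_bdry_at g i)" 5]
      card_right_bdry_at_le[OF assms] by simp
  also have "\<dots> \<le> 5 * plen g"
    using card_inner_idx(2) by simp
  finally show ?thesis .
qed

lemma right_bdry_at_disjoint: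
  assumes path: "is_path g" and simple: "simple_path g" and avoid: "set g \<inter> right_bdry g = {}"
    and i: "i \<in> inner_idx g" and j: "j \<in> inner_idx g" and same: "g ! i = g ! j"
    and wi: "w \<in> right_bdry_at g i" and wj: "w \<in> right_bdry_at g j"
  shows "i = j"
proof -
  define v where "v = g ! i"
  define a where "a = dir_idx v (prev_v g i)"
  define c where "c = dir_idx v (prev_v g j)"
  obtain L where L: "right_bdry_at g i = {u. tadj v u \<and> in_ccw_arc a L (dir_idx v u)}"
    using right_bdry_at_ccw_arc[OF i] by (metis v_def a_def)
  obtain M where M: "right_bdry_at g j = {u. tadj v u \<and> in_ccw_arc c M (dir_idx v u)}"
    using right_bdry_at_ccw_arc[OF j] by (metis v_def c_def same)
  have adj: "tadj v (prev_v g i)" "tadj v (prev_v g j)"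
    using tadj_prev_v[OF path i] tadj_prev_v[OF path j] by (simp_all add: v_def same)
  have "prev_v g i \<notin> right_bdry_at g j" "prev_v g j \<notin> right_bdry_at g i"
    using prev_v_in_set[OF i] prev_v_in_set[OF j] avoid i j unfolding right_bdry_eq_UN by blast+
  then have "\<not> in_ccw_arc c M a" "\<not> in_ccw_arc a L c"
    using adj L M by (simp_all add: a_def c_def)
  moreover have "in_ccw_arc a L (dir_idx v w)" "in_ccw_arc c M (dir_idx v w)" "tadj v w"
    using wi wj L M by simp_all
  ultimately have "a = c"
    using in_ccw_arc_same_start tadj_dir_idx(1) adj a_def c_def by metis
  then have "prev_v g i = prev_v g j"
    using tadj_dir_idx(2) adj a_def c_def by metis
  then show ?thesis
    by (rule simple_path_prev_v_inj[OF simple i j same])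
qed

lemma card_adjacent_pairs_le:
  assumes "finite W"
  shows "card (SIGMA w:W. {u. tadj w u}) \<le> 6 * card W"
proof -
  have "card {u. tadj w u} \<le> 6" for w
    unfolding neighbours_eq using card_image_le[of "{..<6::nat}"] by (metis card_lessThan finite_lessThan)
  then have "(\<Sum>w\<in>W. card {u. tadj w u}) \<le> 6 * card W"
    using sum_bounded_above[of W "\<lambda>w. card {u. tadj w u}" 6] by simp
  with assms show ?thesis
    by (simp add: card_SigmaI finite_neighbours)
qed

lemma plen_le_card_right_bdry:
  assumes "right_most g"
  shows "plen g - 1 \<le> 6 * card (right_bdry g)"
proof -
  have "\<forall>i\<in>inner_idx g. \<exists>w. w \<in> right_bdry_at g i"
    using assms unfolding right_most_def by blast
  then obtain w where w: "\<And>i. i \<in> inner_idx g \<Longrightarrow> w i \<in> right_bdry_at g i"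
    using bchoice by metis
  define f where "f i = (w i, g ! i)" for i
  have inj: "inj_on f (inner_idx g)"
    using right_bdry_at_disjoint[of g] assms w unfolding right_most_def f_def inj_on_def
    by (metis prod.inject)
  have into: "f ` inner_idx g \<subseteq> (SIGMA w:right_bdry g. {u. tadj w u})"
  proof
    fix x assume "x \<in> f ` inner_idx g"
    then obtain i where i: "i \<in> inner_idx g" and x: "x = f i"
      by blast
    have "w i \<in> right_bdry g"
      using w[OF i] i right_bdry_eq_UN by blast
    moreover have "tadj (w i) (g ! i)"
      using right_bdry_at_tadj[OF w[OF i]] tadj_commute by blast
    ultimately show "x \<in> (SIGMA w:right_bdry g. {u. tadj w u})"
      by (simp add: x f_def)
  qed
  have "plen g - 1 \<le> card (inner_idx g)"
    by (rule card_inner_idx(1))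
  also have "\<dots> \<le> card (SIGMA w:right_bdry g. {u. tadj w u})"
    using inj into by (intro card_inj_on_le) (simp_all add: finite_right_bdry finite_neighbours)
  also have "\<dots> \<le> 6 * card (right_bdry g)"
    by (rule card_adjacent_pairs_le[OF finite_right_bdry])
  finally show ?thesis .
qed

theorem lemma2p3:
  fixes g :: "tvert list"
  assumes "right_most g"
  shows "(real (plen g) - 1) / 6 \<le> real (card (right_bdry g)) \<and>
         real (card (right_bdry g)) \<le> 5 * real (plen g)"
proof
  have "plen g - 1 \<le> 6 * card (right_bdry g)"
    by (rule plen_le_card_right_bdry[OF assms])
  then have "real (plen g) - 1 \<le> 6 * real (card (right_bdry g))"
    by linarith
  then show "(real (plen g) - 1) / 6 \<le> real (card (right_bdry g))"
    by simp
  have "card (right_bdry g) \<le> 5 * plen g"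
    using assms by (simp add: card_right_bdry_le right_most_def)
  then show "real (card (right_bdry g)) \<le> 5 * real (plen g)"
    by linarith
qed

end
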